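(* Let $k\geq 3$ be an integer, let $j$ be an integer with $2\leq j\leq k$, and let $0\leq a<b\leq 1$. If $(a,b)\subseteq\left[0,\frac{k-j}{k}\right)$ or $(a,b)\subseteq\left[\frac{j}{k},1\right)$, then $$d_k(a,b)\geq \frac{\log j}{\log k}.$$
   Context: $T_k:[0,1)\to[0,1)$ is the map $T_k(x)=kx \bmod 1$. For $0\leq a<b\leq 1$, $\mathcal{W}_k(a,b)=\{x\in[0,1)\ :\ T_k^n(x)\notin(a,b)\text{ for all } n\geq 0\}$, and $d_k(a,b)$ denotes the Hausdorff dimension of $\mathcal{W}_k(a,b)$. *)

theory Defs
  imports "HOL-Analysis.Analysis"
begin

definition Tk :: "nat \<Rightarrow> real \<Rightarrow> real" where
  "Tk k x = frac (real k * x)"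

definition survivor :: "nat \<Rightarrow> real \<Rightarrow> real \<Rightarrow> real set" where
  "survivor k a b = {x. 0 \<le> x \<and> x < 1 \<and> (\<forall>n. (Tk k ^^ n) x \<notin> {a<..<b})}"

definition diam_pow :: "real \<Rightarrow> real set \<Rightarrow> ennreal" where
  "diam_pow s U = (if U = {} then 0 else if s = 0 then 1 else ennreal (diameter U powr s))"

definition hausdorff_approx :: "real \<Rightarrow> real \<Rightarrow> real set \<Rightarrow> ennreal" where
  "hausdorff_approx s \<delta> E =
     (INF C \<in> {C :: nat \<Rightarrow> real set. E \<subseteq> (\<Union>i. C i) \<and> (\<forall>i. bounded (C i) \<and> diameter (C i) \<le> \<delta>)}.
        (\<Sum>i. diam_pow s (C i)))"

definition hausdorff_measure :: "real \<Rightarrow> real set \<Rightarrow> ennreal" where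
  "hausdorff_measure s E = (SUP \<delta> \<in> {0<..}. hausdorff_approx s \<delta> E)"

definition hausdorff_dim :: "real set \<Rightarrow> real" where
  "hausdorff_dim E = Inf {s. 0 \<le> s \<and> hausdorff_measure s E = 0}"

definition dk :: "nat \<Rightarrow> real \<Rightarrow> real \<Rightarrow> real" where
  "dk k a b = hausdorff_dim (survivor k a b)"

end

(* Fix c with [c/(k-1), (c+j-1)/(k-1)] disjoint from the hole (c = k - j or c = 0).  Points
   whose base-k digits all lie in {c, ..., c+j-1} never enter the hole, and reading the same
   digit sequence w in base j instead gives a map from this Cantor set onto [0,1).  That map is
   Hoelder with exponent ln j / ln k: if w and w' first differ at position n, the points are
   at least of order k^-n apart while the base-j values are at most j^-n = (k^-n) powr
   (ln j / ln k) apart.  Any cover of the Cantor set therefore induces a cover of [0,1) whose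
   Lebesgue measure bounds the (ln j / ln k)-dimensional sums from below. *)

theory Submission
  imports Defs
begin

definition digit_series :: "real \<Rightarrow> (nat \<Rightarrow> real) \<Rightarrow> real" where
  "digit_series b d = (\<Sum>n. d n / b ^ Suc n)"

lemma geometric_digit_sums:
  fixes b M :: real
  assumes "b > 1"
  shows "(\<lambda>n. M / b ^ Suc n) sums (M / (b - 1))"
proof -
  have "(\<lambda>n. (M / b) * (1 / b) ^ n) sums ((M / b) * (1 / (1 - 1 / b)))"
    using assms by (intro sums_mult geometric_sums) simp
  moreover have "(M / b) * (1 / (1 - 1 / b)) = M / (b - 1)"
    using assms by (simp add: field_simps)
  moreover have "(\<lambda>n. (M / b) * (1 / b) ^ n) = (\<lambda>n. M / b ^ Suc n)"
    by (simp add: power_divide field_simps)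
  ultimately show ?thesis by metis
qed

lemma digit_series_summable:
  fixes b M :: real
  assumes "b > 1" "\<And>n. 0 \<le> d n" "\<And>n. d n \<le> M"
  shows "summable (\<lambda>n. d n / b ^ Suc n)"
proof (rule summable_comparison_test')
  show "summable (\<lambda>n. M / b ^ Suc n)"
    using geometric_digit_sums[OF assms(1)] by (rule sums_summable)
  show "norm (d n / b ^ Suc n) \<le> M / b ^ Suc n" for n
    using assms by (simp add: divide_right_mono)
qed

lemma digit_series_mono:
  fixes b M :: real
  assumes "b > 1" "\<And>n. 0 \<le> d n" "\<And>n. d n \<le> d' n" "\<And>n. d' n \<le> M"
  shows "digit_series b d \<le> digit_series b d'"
  unfolding digit_series_def
proof (rule suminf_le)
  show "summable (\<lambda>n. d n / b ^ Suc n)" "summable (\<lambda>n. d' n / b ^ Suc n)"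
    using assms order_trans by (blast intro: digit_series_summable)+
qed (use assms in \<open>simp add: divide_right_mono\<close>)

lemma digit_series_const: "b > 1 \<Longrightarrow> digit_series b (\<lambda>_. M) = M / (b - 1)"
  unfolding digit_series_def by (rule sums_unique[symmetric, OF geometric_digit_sums])

lemma digit_series_bounds:
  fixes b m M :: real
  assumes "b > 1" "0 \<le> m" "\<And>n. m \<le> d n" "\<And>n. d n \<le> M"
  shows "m / (b - 1) \<le> digit_series b d" "digit_series b d \<le> M / (b - 1)"
proof -
  have "\<And>n. 0 \<le> d n" using assms order_trans by blast
  then show "m / (b - 1) \<le> digit_series b d" "digit_series b d \<le> M / (b - 1)"
    using digit_series_mono[of b "\<lambda>_. m" d M] digit_series_mono[of b d "\<lambda>_. M" M]
      digit_series_const[of b] assms by auto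
qed

lemma digit_series_less:
  fixes b M :: real
  assumes "b > 1" "\<And>n. 0 \<le> d n" "\<And>n. d n \<le> M" "d m < M"
  shows "digit_series b d < M / (b - 1)"
proof -
  have s: "summable (\<lambda>n. d n / b ^ Suc n)"
    using digit_series_summable assms by blast
  have g: "summable (\<lambda>n. M / b ^ Suc n)"
    using geometric_digit_sums[OF assms(1)] by (rule sums_summable)
  have "0 < (\<Sum>n. M / b ^ Suc n - d n / b ^ Suc n)"
  proof (subst suminf_pos_iff)
    show "summable (\<lambda>n. M / b ^ Suc n - d n / b ^ Suc n)"
      by (rule summable_diff[OF g s])
    show "0 \<le> M / b ^ Suc n - d n / b ^ Suc n" for n
      using assms by (simp add: divide_right_mono)
    show "\<exists>i. 0 < M / b ^ Suc i - d i / b ^ Suc i"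
      using assms by (intro exI[of _ m]) (simp add: divide_strict_right_mono)
  qed
  also have "\<dots> = M / (b - 1) - digit_series b d"
    unfolding suminf_diff[OF g s, symmetric] digit_series_const[OF assms(1), symmetric]
    by (simp add: digit_series_def)
  finally show ?thesis by simp
qed

lemma digit_series_head:
  assumes "b > 1" "\<And>n. 0 \<le> d n" "\<And>n. d n \<le> M"
  shows "digit_series b d = (d 0 + digit_series b (\<lambda>n. d (Suc n))) / b"
proof -
  have s: "summable (\<lambda>n. d n / b ^ Suc n)"
    using digit_series_summable assms by blast
  have s': "summable (\<lambda>n. d (Suc n) / b ^ Suc n)"
    using digit_series_summable[of b "\<lambda>n. d (Suc n)" M] assms by blast
  have "digit_series b d = d 0 / b + (\<Sum>n. d (Suc n) / b ^ Suc (Suc n))"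
    using suminf_split_head[OF s] by (simp add: digit_series_def)
  also have "(\<Sum>n. d (Suc n) / b ^ Suc (Suc n)) = digit_series b (\<lambda>n. d (Suc n)) / b"
    unfolding digit_series_def suminf_divide[OF s', symmetric] by (simp add: field_simps)
  finally show ?thesis by (simp add: add_divide_distrib)
qed

lemma digit_series_diff_common_prefix:
  fixes b M :: real
  assumes "b > 1" "\<And>n. 0 \<le> d n" "\<And>n. d n \<le> M" "\<And>n. 0 \<le> d' n" "\<And>n. d' n \<le> M"
    and "\<forall>i<n. d i = d' i"
  shows "digit_series b d - digit_series b d'
           = (digit_series b (\<lambda>i. d (i + n)) - digit_series b (\<lambda>i. d' (i + n))) / b ^ n"
  using assms(6)
proof (induction n)
  case (Suc n)
  have head: "digit_series b (\<lambda>i. e (i + n)) = (e n + digit_series b (\<lambda>i. e (i + Suc n))) / b"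
    if "\<And>n. 0 \<le> e n" "\<And>n. e n \<le> M" for e
    using digit_series_head[of b "\<lambda>i. e (i + n)" M] assms(1) that by simp
  have "d n = d' n" using Suc.prems by simp
  then have "digit_series b (\<lambda>i. d (i + n)) - digit_series b (\<lambda>i. d' (i + n))
      = (digit_series b (\<lambda>i. d (i + Suc n)) - digit_series b (\<lambda>i. d' (i + Suc n))) / b"
    using head[of d] head[of d'] assms by (simp add: add_divide_distrib diff_divide_distrib)
  with Suc show ?case by (simp add: mult.commute)
qed simp

(* Words ending in (j-1)^\<omega> are excluded: they would put the coded point on the right end
   of its window, and they are not base-j expansions produced by the greedy algorithm. *)
definition admissible_words :: "nat \<Rightarrow> (nat \<Rightarrow> nat) set" where
  "admissible_words j = {w. (\<forall>n. w n < j) \<and> (\<forall>n. \<exists>m\<ge>n. w m < j - 1)}"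

definition coded_point :: "nat \<Rightarrow> nat \<Rightarrow> (nat \<Rightarrow> nat) \<Rightarrow> real" where
  "coded_point k c w = digit_series (real k) (\<lambda>n. real c + real (w n))"

definition word_value :: "nat \<Rightarrow> (nat \<Rightarrow> nat) \<Rightarrow> real" where
  "word_value j w = digit_series (real j) (\<lambda>n. real (w n))"

lemma admissible_words_shift:
  assumes "w \<in> admissible_words j"
  shows "(\<lambda>i. w (i + n)) \<in> admissible_words j"
  unfolding admissible_words_def
proof safe
  fix m
  obtain p where "p \<ge> m + n" "w p < j - 1"
    using assms unfolding admissible_words_def by blast
  then show "\<exists>p\<ge>m. w (p + n) < j - 1"
    by (intro exI[of _ "p - n"]) auto
qed (use assms in \<open>auto simp: admissible_words_def\<close>)

lemma admissible_word_digit_le: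
  assumes "w \<in> admissible_words j"
  shows "real (w n) \<le> real j - 1"
proof -
  have "Suc (w n) \<le> j" using assms by (simp add: admissible_words_def Suc_le_eq)
  then have "real (w n) + 1 \<le> real j" by (metis of_nat_Suc of_nat_le_iff add.commute)
  then show ?thesis by simp
qed

lemma coded_point_bounds:
  assumes "k \<ge> 2" "w \<in> admissible_words j"
  shows "real c / (real k - 1) \<le> coded_point k c w"
    and "coded_point k c w < (real c + real j - 1) / (real k - 1)"
proof -
  have k: "real k > 1" using assms(1) by simp
  have digits: "real c + real (w n) \<le> real c + real j - 1" for n
    using admissible_word_digit_le[OF assms(2)] by simp
  obtain m where "w m < j - 1"
    using assms(2) unfolding admissible_words_def by blast
  then have "real c + real (w m) < real c + real j - 1" by linarith
  then show "coded_point k c w < (real c + real j - 1) / (real k - 1)"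
    unfolding coded_point_def by (intro digit_series_less[OF k _ digits]) auto
  show "real c / (real k - 1) \<le> coded_point k c w"
    unfolding coded_point_def using digit_series_bounds(1)[OF k _ _ digits] by simp
qed

lemma coded_point_diff_bound:
  assumes "k \<ge> 2" "w \<in> admissible_words j" "w' \<in> admissible_words j"
  shows "\<bar>coded_point k c w - coded_point k c w'\<bar> \<le> (real j - 1) / (real k - 1)"
  using coded_point_bounds[OF assms(1,2), of c] coded_point_bounds[OF assms(1,3), of c]
  by (simp add: abs_le_iff diff_divide_distrib add_divide_distrib)

lemma coded_point_head:
  assumes "k \<ge> 2" "w \<in> admissible_words j"
  shows "real k * coded_point k c w = real (c + w 0) + coded_point k c (\<lambda>n. w (Suc n))"
proof -
  have "real c + real (w n) \<le> real c + real j" for n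
    using assms(2) by (auto simp: admissible_words_def less_imp_le)
  then show ?thesis
    using digit_series_head[of "real k" "\<lambda>n. real c + real (w n)" "real c + real j"] assms(1)
    by (simp add: coded_point_def field_simps)
qed

lemma coded_point_less_1:
  assumes "c + j \<le> k" "2 \<le> j" "w \<in> admissible_words j"
  shows "0 \<le> coded_point k c w" "coded_point k c w < 1"
proof -
  have k: "k \<ge> 2" using assms by simp
  have "0 \<le> real c / (real k - 1)" using k by simp
  then show "0 \<le> coded_point k c w"
    using coded_point_bounds(1)[OF k assms(3), of c] by linarith
  have "(real c + real j - 1) / (real k - 1) \<le> 1"
    using assms by (simp add: divide_le_eq_1)
  then show "coded_point k c w < 1"
    using coded_point_bounds(2)[OF k assms(3), of c] by linarith
qed

lemma Tk_iterate_coded_point: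
  assumes "c + j \<le> k" "2 \<le> j" "w \<in> admissible_words j"
  shows "(Tk k ^^ n) (coded_point k c w) = coded_point k c (\<lambda>i. w (i + n))"
proof (induction n)
  case (Suc n)
  let ?v = "\<lambda>i. w (i + n)"
  have v: "?v \<in> admissible_words j" "(\<lambda>i. ?v (Suc i)) \<in> admissible_words j"
    using admissible_words_shift[OF assms(3)] admissible_words_shift[of ?v j 1] by auto
  have "(Tk k ^^ Suc n) (coded_point k c w) = frac (real k * coded_point k c ?v)"
    by (simp only: funpow.simps comp_def Suc.IH) (simp add: Tk_def)
  also have "\<dots> = frac (real (c + ?v 0) + coded_point k c (\<lambda>i. ?v (Suc i)))"
    using coded_point_head[OF _ v(1), of k c] assms by simp
  also have "\<dots> = coded_point k c (\<lambda>i. ?v (Suc i))"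
    using coded_point_less_1[OF assms(1,2) v(2)]
    by (metis frac_add_of_int_left frac_eq of_int_of_nat_eq)
  finally show ?case by simp
qed simp

lemma coded_point_in_survivor:
  assumes "c + j \<le> k" "2 \<le> j" "w \<in> admissible_words j"
    and "{a<..<b} \<inter> {real c / (real k - 1) ..< (real c + real j - 1) / (real k - 1)} = {}"
  shows "coded_point k c w \<in> survivor k a b"
proof -
  have "coded_point k c (\<lambda>i. w (i + n)) \<notin> {a<..<b}" for n
    using coded_point_bounds[OF _ admissible_words_shift[OF assms(3)], of k c n] assms by auto
  then show ?thesis
    using coded_point_less_1[OF assms(1-3)] Tk_iterate_coded_point[OF assms(1-3)]
    by (simp add: survivor_def)
qed

lemma word_value_diff_le:
  assumes "2 \<le> j" "w \<in> admissible_words j" "w' \<in> admissible_words j" "\<forall>i<n. w i = w' i"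
  shows "\<bar>word_value j w - word_value j w'\<bar> \<le> 1 / real j ^ n"
proof -
  have j: "real j > 1" using assms(1) by simp
  have digits: "0 \<le> real (v i)" "real (v i) \<le> real j - 1" if "v \<in> admissible_words j" for v i
    using admissible_word_digit_le[OF that] by auto
  have range: "0 \<le> word_value j v" "word_value j v \<le> 1" if "v \<in> admissible_words j" for v
    using digit_series_bounds[OF j order_refl digits(1)[OF that] digits(2)[OF that]] j
    by (auto simp: word_value_def)
  have "word_value j w - word_value j w'
      = (word_value j (\<lambda>i. w (i + n)) - word_value j (\<lambda>i. w' (i + n))) / real j ^ n"
    unfolding word_value_def
    by (rule digit_series_diff_common_prefix[OF j, where M = "real j - 1"]) (use assms digits in auto)
  moreover have "\<bar>word_value j (\<lambda>i. w (i + n)) - word_value j (\<lambda>i. w' (i + n))\<bar> \<le> 1"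
    using range[OF admissible_words_shift[OF assms(2), of n]] range[OF admissible_words_shift[OF assms(3), of n]]
    by linarith
  ultimately show ?thesis
    using j by (simp add: abs_div divide_right_mono)
qed

lemma coded_point_diff_ge:
  assumes "j < k" "2 \<le> j" "w \<in> admissible_words j" "w' \<in> admissible_words j"
    and "\<forall>i<n. w i = w' i" "w n \<noteq> w' n"
  shows "(real k - real j) / (real k - 1) / real k ^ Suc n
           \<le> \<bar>coded_point k c w - coded_point k c w'\<bar>"
proof -
  have k: "k \<ge> 2" "real k > 1" using assms by auto
  let ?v = "\<lambda>i. w (i + n)" and ?v' = "\<lambda>i. w' (i + n)"
  have v: "?v \<in> admissible_words j" "?v' \<in> admissible_words j"
    using admissible_words_shift assms(3,4) by blast+
  have v1: "(\<lambda>i. ?v (Suc i)) \<in> admissible_words j" "(\<lambda>i. ?v' (Suc i)) \<in> admissible_words j"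
    using admissible_words_shift[OF v(1), of 1] admissible_words_shift[OF v(2), of 1] by simp_all
  have digits: "0 \<le> real c + real (u i)" "real c + real (u i) \<le> real c + real j"
    if "u \<in> admissible_words j" for u i
    using that by (auto simp: admissible_words_def less_imp_le)
  have shift: "coded_point k c w - coded_point k c w'
      = (coded_point k c ?v - coded_point k c ?v') / real k ^ n"
    unfolding coded_point_def
    by (rule digit_series_diff_common_prefix[OF k(2), where M = "real c + real j"])
      (use assms digits in auto)
  \<comment> \<open>The first differing digits are at least 1 apart, while the tails differ by at most (j-1)/(k-1).\<close>
  have "real k * (coded_point k c ?v - coded_point k c ?v')
      = (real (w n) - real (w' n))
        + (coded_point k c (\<lambda>i. ?v (Suc i)) - coded_point k c (\<lambda>i. ?v' (Suc i)))"
    using coded_point_head[OF k(1) v(1), of c] coded_point_head[OF k(1) v(2), of c]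
    by (simp add: right_diff_distrib)
  moreover have "1 \<le> \<bar>real (w n) - real (w' n)\<bar>" using assms(6) by linarith
  moreover have "\<bar>coded_point k c (\<lambda>i. ?v (Suc i)) - coded_point k c (\<lambda>i. ?v' (Suc i))\<bar>
      \<le> (real j - 1) / (real k - 1)"
    by (rule coded_point_diff_bound[OF k(1) v1])
  moreover have "(real k - real j) / (real k - 1) = 1 - (real j - 1) / (real k - 1)"
    using k by (simp add: field_simps)
  ultimately have "(real k - real j) / (real k - 1)
      \<le> \<bar>real k * (coded_point k c ?v - coded_point k c ?v')\<bar>"
    by (smt (verit))
  then have "(real k - real j) / (real k - 1) / real k \<le> \<bar>coded_point k c ?v - coded_point k c ?v'\<bar>"
    using k by (simp add: abs_mult pos_divide_le_eq mult.commute mult.left_commute)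
  then show ?thesis
    unfolding shift using k by (simp add: abs_div divide_right_mono flip: divide_divide_eq_left)
qed

lemma power_powr_ln_ratio:
  fixes k j :: real
  assumes "0 < k" "k \<noteq> 1" "0 < j"
  shows "(k ^ m) powr (ln j / ln k) = j ^ m"
proof -
  have "(k ^ m) powr (ln j / ln k) = (k powr (ln j / ln k)) ^ m"
    using assms by (simp add: powr_realpow[symmetric] powr_powr powr_power mult.commute)
  also have "k powr (ln j / ln k) = j"
    using assms by (simp add: powr_def)
  finally show ?thesis .
qed

lemma word_value_holder:
  assumes "j < k" "2 \<le> j" "w \<in> admissible_words j" "w' \<in> admissible_words j"
  shows "\<bar>word_value j w - word_value j w'\<bar>
           \<le> real j * (real k - 1) / (real k - real j)
              * \<bar>coded_point k c w - coded_point k c w'\<bar> powr (ln (real j) / ln (real k))"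
proof (cases "w = w'")
  case False
  define s where "s = ln (real j) / ln (real k)"
  define A where "A = (real k - real j) / (real k - 1)"
  have jk: "real j > 1" "real k > 1" "real j < real k" using assms by auto
  have A: "0 < A" "A \<le> 1" using jk by (auto simp: A_def)
  have s: "0 < s" "s \<le> 1" using jk by (auto simp: s_def)
  obtain n where n: "w n \<noteq> w' n" "\<forall>i<n. w i = w' i"
    using False exists_least_iff[of "\<lambda>n. w n \<noteq> w' n"] by (auto simp: fun_eq_iff)
  have "A / real j ^ Suc n \<le> A powr s / real j ^ Suc n"
    using powr_mono'[of s 1 A] A s jk by (simp add: divide_right_mono)
  also have "\<dots> = (A / real k ^ Suc n) powr s"
    using A jk power_powr_ln_ratio[of "real k" "real j" "Suc n"]
    by (simp add: powr_divide s_def del: power_Suc)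
  also have "\<dots> \<le> \<bar>coded_point k c w - coded_point k c w'\<bar> powr s"
    using coded_point_diff_ge[OF assms n(2,1), of c] A s jk
    by (intro powr_mono2) (auto simp: A_def)
  finally have "real j / A * (A / real j ^ Suc n)
      \<le> real j / A * \<bar>coded_point k c w - coded_point k c w'\<bar> powr s"
    using A jk by (intro mult_left_mono) auto
  moreover have "real j / A * (A / real j ^ Suc n) = 1 / real j ^ n"
    using A jk by simp
  ultimately have "1 / real j ^ n \<le> real j / A * \<bar>coded_point k c w - coded_point k c w'\<bar> powr s"
    by simp
  then show ?thesis
    using word_value_diff_le[OF assms(2-4) n(2)] by (simp add: A_def s_def)
qed simp

definition expansion_word :: "nat \<Rightarrow> real \<Rightarrow> nat \<Rightarrow> nat" where
  "expansion_word j y n = nat \<lfloor>real j * (Tk j ^^ n) y\<rfloor>"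

lemma Tk_iterate_unit_interval:
  assumes "0 \<le> y" "y < 1"
  shows "0 \<le> (Tk j ^^ n) y \<and> (Tk j ^^ n) y < 1"
  using assms by (cases n) (auto simp: Tk_def frac_lt_1)

lemma expansion_word_less:
  assumes "0 \<le> y" "y < 1" "j \<ge> 1"
  shows "expansion_word j y n < j"
proof -
  have "real j * (Tk j ^^ n) y < real j"
    using Tk_iterate_unit_interval[OF assms(1,2)] assms(3) by simp
  then show ?thesis
    using Tk_iterate_unit_interval[OF assms(1,2)]
    by (simp add: expansion_word_def nat_less_iff floor_less_iff)
qed

lemma expansion_word_remainder:
  assumes "0 \<le> y" "y < 1" "j \<ge> 1"
  shows "y = (\<Sum>n<N. real (expansion_word j y n) / real j ^ Suc n) + (Tk j ^^ N) y / real j ^ N"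
proof (induction N)
  case (Suc N)
  define z where "z = (Tk j ^^ N) y"
  have "0 \<le> \<lfloor>real j * z\<rfloor>"
    using Tk_iterate_unit_interval[OF assms(1,2)] by (simp add: z_def)
  then have "z = (real (expansion_word j y N) + (Tk j ^^ Suc N) y) / real j"
    using assms(3) by (simp add: z_def expansion_word_def Tk_def frac_def field_simps)
  then have "z / real j ^ N
      = real (expansion_word j y N) / real j ^ Suc N + (Tk j ^^ Suc N) y / real j ^ Suc N"
    by (simp add: add_divide_distrib)
  with Suc.IH show ?case by (simp add: z_def)
qed simp

lemma word_value_expansion_word:
  assumes "0 \<le> y" "y < 1" "j \<ge> 2"
  shows "word_value j (expansion_word j y) = y"
proof -
  have j: "real j > 1" using assms(3) by simp
  have "(\<lambda>N. y - (\<Sum>n<N. real (expansion_word j y n) / real j ^ Suc n)) \<longlonglongrightarrow> 0"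
  proof (rule Lim_null_comparison)
    show "\<forall>\<^sub>F N in sequentially.
        norm (y - (\<Sum>n<N. real (expansion_word j y n) / real j ^ Suc n)) \<le> (1 / real j) ^ N"
    proof (intro always_eventually allI)
      fix N
      have "y - (\<Sum>n<N. real (expansion_word j y n) / real j ^ Suc n) = (Tk j ^^ N) y / real j ^ N"
        using expansion_word_remainder[OF assms(1,2), of j N] assms(3) by linarith
      then have "norm (y - (\<Sum>n<N. real (expansion_word j y n) / real j ^ Suc n))
          = (Tk j ^^ N) y / real j ^ N"
        using Tk_iterate_unit_interval[OF assms(1,2)] by simp
      also have "\<dots> \<le> (1 / real j) ^ N"
        using Tk_iterate_unit_interval[OF assms(1,2), where j = j and n = N] j
        by (simp add: power_one_over divide_right_mono less_imp_le)
      finally show "norm (y - (\<Sum>n<N. real (expansion_word j y n) / real j ^ Suc n)) \<le> (1 / real j) ^ N" .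
    qed
    show "(\<lambda>N. (1 / real j) ^ N) \<longlonglongrightarrow> 0"
      using j by (intro LIMSEQ_power_zero) simp
  qed
  then have "(\<lambda>N. y - (y - (\<Sum>n<N. real (expansion_word j y n) / real j ^ Suc n))) \<longlonglongrightarrow> y - 0"
    by (intro tendsto_diff tendsto_const)
  then have "(\<lambda>n. real (expansion_word j y n) / real j ^ Suc n) sums y"
    unfolding sums_def by simp
  then show ?thesis
    unfolding word_value_def digit_series_def by (rule sums_unique[symmetric])
qed

lemma expansion_word_admissible:
  assumes "0 \<le> y" "y < 1" "j \<ge> 2"
  shows "expansion_word j y \<in> admissible_words j"
proof -
  have less: "expansion_word j z n < j" if "0 \<le> z" "z < 1" for z n
    using expansion_word_less that assms(3) by simp
  have "\<exists>m\<ge>n. expansion_word j y m < j - 1" for n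
  proof (rule ccontr)
    assume no_small: "\<not> (\<exists>m\<ge>n. expansion_word j y m < j - 1)"
    have tail: "expansion_word j y (i + n) = j - 1" for i
    proof -
      have "\<not> expansion_word j y (i + n) < j - 1" using no_small by auto
      then show ?thesis using less[OF assms(1,2), of "i + n"] by arith
    qed
    define z where "z = (Tk j ^^ n) y"
    have z: "0 \<le> z" "z < 1"
      using Tk_iterate_unit_interval[OF assms(1,2)] by (simp_all add: z_def)
    have "expansion_word j z = (\<lambda>_. j - 1)"
      using tail by (simp add: fun_eq_iff z_def expansion_word_def funpow_add)
    then have "word_value j (expansion_word j z) = 1"
      using digit_series_const[of "real j" "real j - 1"] assms(3)
      by (simp add: word_value_def of_nat_diff)
    then show False
      using word_value_expansion_word[OF z assms(3)] z by simp
  qed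
  then show ?thesis
    using less[OF assms(1,2)] by (simp add: admissible_words_def)
qed

lemma unit_interval_subset_word_value_image:
  assumes "j \<ge> 2"
  shows "{0..<1} \<subseteq> word_value j ` admissible_words j"
proof
  fix y :: real
  assume "y \<in> {0..<1}"
  then show "y \<in> word_value j ` admissible_words j"
    using expansion_word_admissible[of y j] word_value_expansion_word[of y j] assms
    by (auto intro: rev_image_eqI)
qed

lemma unit_interval_grid_cell:
  fixes x :: real
  assumes "0 \<le> x" "x < 1" "N \<ge> 1"
  obtains i where "i < N" "real i / real N \<le> x" "x \<le> (real i + 1) / real N"
proof -
  define i where "i = nat \<lfloor>x * real N\<rfloor>"
  have N: "real N > 0" using assms(3) by simp
  have floor_nonneg: "0 \<le> \<lfloor>x * real N\<rfloor>" using assms(1) N by simp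
  have "x * real N < real N" using assms(2) N by simp
  then have "i < N" using floor_nonneg by (simp add: i_def floor_less_iff nat_less_iff)
  moreover have "real i = of_int \<lfloor>x * real N\<rfloor>" using floor_nonneg by (simp add: i_def)
  then have "real i \<le> x * real N" "x * real N < real i + 1" by linarith+
  then have "real i / real N \<le> x" "x \<le> (real i + 1) / real N"
    using N by (simp_all add: field_simps)
  ultimately show thesis by (rule that)
qed

lemma hausdorff_approx_2_le_inverse:
  assumes E: "E \<subseteq> {0..<1}" and N: "N \<ge> 1" and \<delta>: "1 / real N \<le> \<delta>"
  shows "hausdorff_approx 2 \<delta> E \<le> ennreal (1 / real N)"
proof -
  define C where "C i = (if i < N then {real i / real N .. (real i + 1) / real N} else {})" for i
  have N0: "real N > 0" using N by simp
  have cover: "E \<subseteq> (\<Union>i. C i)"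
  proof
    fix x assume "x \<in> E"
    then have "0 \<le> x" "x < 1" using E by auto
    then obtain i where "i < N" "real i / real N \<le> x" "x \<le> (real i + 1) / real N"
      using N by (rule unit_interval_grid_cell)
    then show "x \<in> (\<Union>i. C i)" by (auto simp: C_def)
  qed
  have diameter_C: "C i \<noteq> {} \<and> diameter (C i) = 1 / real N" if "i < N" for i
  proof -
    have "real i / real N \<le> (real i + 1) / real N" using N0 by (simp add: divide_right_mono)
    moreover have "(real i + 1) / real N - real i / real N = 1 / real N"
      by (simp add: diff_divide_distrib[symmetric])
    ultimately show ?thesis using that by (auto simp: C_def)
  qed
  have "0 \<le> \<delta>" using \<delta> by (meson order_trans zero_le_divide_1_iff of_nat_0_le_iff)
  have "diameter (C i) \<le> \<delta>" for i
  proof (cases "i < N")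
    case True
    then show ?thesis using \<delta> diameter_C by simp
  qed (use \<open>0 \<le> \<delta>\<close> in \<open>simp add: C_def\<close>)
  then have "hausdorff_approx 2 \<delta> E \<le> (\<Sum>i. diam_pow 2 (C i))"
    unfolding hausdorff_approx_def using cover by (intro INF_lower) (auto simp: C_def)
  also have "\<dots> = (\<Sum>i<N. diam_pow 2 (C i))"
    by (rule suminf_finite) (auto simp: C_def diam_pow_def)
  also have "\<dots> = (\<Sum>i<N. ennreal ((1 / real N) ^ 2))"
    by (rule sum.cong) (use diameter_C in \<open>auto simp: diam_pow_def powr_numeral\<close>)
  also have "\<dots> = ennreal (real N * (1 / real N) ^ 2)"
    by (simp only: sum_constant card_lessThan ennreal_of_nat_eq_real_of_nat
        ennreal_mult'[symmetric] of_nat_0_le_iff)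
  also have "real N * (1 / real N) ^ 2 = 1 / real N"
    using N0 by (simp add: power2_eq_square)
  finally show ?thesis .
qed

lemma hausdorff_measure_2_eq_0:
  assumes "E \<subseteq> {0..<1}"
  shows "hausdorff_measure 2 E = 0"
proof -
  have "hausdorff_approx 2 \<delta> E \<le> 0" if "\<delta> > 0" for \<delta>
  proof (rule ennreal_le_epsilon)
    fix e :: real
    assume "0 < e"
    define N where "N = nat \<lceil>max (1 / \<delta>) (1 / e)\<rceil> + 1"
    have N: "N \<ge> 1" "max (1 / \<delta>) (1 / e) \<le> real N"
      unfolding N_def by linarith+
    then have "1 / real N \<le> \<delta>" "1 / real N \<le> e"
      using \<open>0 < e\<close> that by (auto simp: field_simps)
    then have "hausdorff_approx 2 \<delta> E \<le> ennreal (1 / real N)"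
      using hausdorff_approx_2_le_inverse[OF assms N(1)] by blast
    also have "\<dots> \<le> ennreal e"
      using \<open>1 / real N \<le> e\<close> by (rule ennreal_leI)
    finally show "hausdorff_approx 2 \<delta> E \<le> 0 + ennreal e" by simp
  qed
  then show ?thesis
    by (simp add: hausdorff_measure_def)
qed

lemma diameter_powr_le_diam_pow:
  assumes "U \<noteq> {}" "0 \<le> s" "s \<le> t" "diameter U \<le> 1" "bounded U"
  shows "ennreal (diameter U powr t) \<le> diam_pow s U"
proof (cases "s = 0")
  case True
  have "diameter U powr t \<le> 1 powr t"
    using assms diameter_ge_0 by (intro powr_mono2) auto
  then show ?thesis using True assms by (simp add: diam_pow_def)
next
  case False
  have "diameter U powr t \<le> diameter U powr s"
    using powr_mono'[OF assms(3) diameter_ge_0[OF assms(5)] assms(4)] .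
  then show ?thesis using False assms by (simp add: diam_pow_def)
qed

(* The h-values of the points of g ` W lying in C i are within L * diameter (C i) powr t of
   each other, so intervals of twice that length around them cover [0,1). *)
lemma holder_cover_sum_ge:
  fixes g h :: "'a \<Rightarrow> real" and C :: "nat \<Rightarrow> real set"
  assumes onto: "{0..<1} \<subseteq> h ` W"
    and holder: "\<And>w w'. w \<in> W \<Longrightarrow> w' \<in> W \<Longrightarrow> \<bar>h w - h w'\<bar> \<le> L * \<bar>g w - g w'\<bar> powr t"
    and L: "L > 0" and s: "0 \<le> s" "s \<le> t"
    and cover: "g ` W \<subseteq> (\<Union>i. C i)" and bounded: "\<And>i. bounded (C i)"
    and small: "\<And>i. diameter (C i) \<le> 1"
  shows "ennreal (1 / (2 * L)) \<le> (\<Sum>i. diam_pow s (C i))"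
proof -
  define V where "V i = h ` {w \<in> W. g w \<in> C i}" for i
  define D where "D i = L * diameter (C i) powr t" for i
  define I where "I i = (if V i = {} then {} else {(SOME y. y \<in> V i) - D i .. (SOME y. y \<in> V i) + D i})" for i
  have V_close: "\<bar>y - y'\<bar> \<le> D i" if yy: "y \<in> V i" "y' \<in> V i" for i y y'
  proof -
    obtain w w' where w: "w \<in> W" "g w \<in> C i" "y = h w" and w': "w' \<in> W" "g w' \<in> C i" "y' = h w'"
      using yy unfolding V_def by blast
    have "\<bar>g w - g w'\<bar> \<le> diameter (C i)"
      using diameter_bounded_bound[OF bounded w(2) w'(2)] by (simp add: dist_real_def)
    then have "L * \<bar>g w - g w'\<bar> powr t \<le> D i"
      unfolding D_def using L s by (intro mult_left_mono powr_mono2) auto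
    then show ?thesis using holder[OF w(1) w'(1)] w w' by simp
  qed
  have "{0..<1} \<subseteq> (\<Union>i. I i)"
  proof
    fix y :: real assume "y \<in> {0..<1}"
    then obtain w where "w \<in> W" "y = h w" using onto by auto
    moreover obtain i where "g w \<in> C i" using cover \<open>w \<in> W\<close> by auto
    ultimately have "y \<in> V i" by (auto simp: V_def)
    then have "\<bar>y - (SOME y. y \<in> V i)\<bar> \<le> D i"
      using V_close someI[of "\<lambda>y. y \<in> V i"] by blast
    then show "y \<in> (\<Union>i. I i)"
      using \<open>y \<in> V i\<close> by (auto simp: I_def abs_le_iff)
  qed
  moreover have "(\<Union>i. I i) \<in> sets lborel"
    by (auto simp: I_def)
  ultimately have "emeasure lborel {0..<(1::real)} \<le> emeasure lborel (\<Union>i. I i)"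
    by (rule emeasure_mono)
  then have "ennreal 1 \<le> emeasure lborel (\<Union>i. I i)"
    by simp
  also have "\<dots> \<le> (\<Sum>i. emeasure lborel (I i))"
    by (rule emeasure_subadditive_countably) (auto simp: I_def)
  also have "\<dots> \<le> (\<Sum>i. ennreal (2 * L) * diam_pow s (C i))"
  proof (intro suminf_le allI)
    fix i
    show "emeasure lborel (I i) \<le> ennreal (2 * L) * diam_pow s (C i)"
    proof (cases "V i = {}")
      case False
      then have "C i \<noteq> {}" by (auto simp: V_def)
      have "emeasure lborel (I i) = ennreal (2 * L) * ennreal (diameter (C i) powr t)"
        using False L by (simp add: I_def D_def ennreal_mult[symmetric] mult.assoc)
      also have "\<dots> \<le> ennreal (2 * L) * diam_pow s (C i)"
        using diameter_powr_le_diam_pow[OF \<open>C i \<noteq> {}\<close> s small bounded] by (rule mult_left_mono) simp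
      finally show ?thesis .
    qed (simp add: I_def)
  qed auto
  also have "\<dots> = ennreal (2 * L) * (\<Sum>i. diam_pow s (C i))"
    by simp
  finally have "ennreal (1 / (2 * L)) * ennreal 1
      \<le> ennreal (1 / (2 * L)) * (ennreal (2 * L) * (\<Sum>i. diam_pow s (C i)))"
    by (rule mult_left_mono) simp
  then show ?thesis
    using L by (simp add: mult.assoc[symmetric] ennreal_mult[symmetric])
qed

lemma hausdorff_dim_ge_holder:
  fixes g h :: "'a \<Rightarrow> real"
  assumes E: "E \<subseteq> {0..<1}" "g ` W \<subseteq> E" and onto: "{0..<1} \<subseteq> h ` W"
    and holder: "\<And>w w'. w \<in> W \<Longrightarrow> w' \<in> W \<Longrightarrow> \<bar>h w - h w'\<bar> \<le> L * \<bar>g w - g w'\<bar> powr t"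
    and L: "L > 0"
  shows "t \<le> hausdorff_dim E"
  unfolding hausdorff_dim_def
proof (rule cInf_greatest)
  have "2 \<in> {s. 0 \<le> s \<and> hausdorff_measure s E = 0}"
    using hausdorff_measure_2_eq_0[OF E(1)] by simp
  then show "{s. 0 \<le> s \<and> hausdorff_measure s E = 0} \<noteq> {}"
    by blast
  fix s
  assume s: "s \<in> {s. 0 \<le> s \<and> hausdorff_measure s E = 0}"
  show "t \<le> s"
  proof (rule ccontr)
    assume "\<not> t \<le> s"
    then have "ennreal (1 / (2 * L)) \<le> hausdorff_approx s 1 E"
      unfolding hausdorff_approx_def using E(2) s
      by (intro INF_greatest holder_cover_sum_ge[OF onto holder L]) auto
    also have "\<dots> \<le> hausdorff_measure s E"
      unfolding hausdorff_measure_def by (rule SUP_upper) auto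
    finally show False
      using s L by simp
  qed
qed

lemma window_avoiding_hole:
  fixes a b :: real
  assumes "2 \<le> j" "j \<le> k"
    and "{a<..<b} \<subseteq> {0..<(real k - real j) / real k} \<or> {a<..<b} \<subseteq> {real j / real k..<1}"
  obtains c where "c + j \<le> k"
    and "{a<..<b} \<inter> {real c / (real k - 1) ..< (real c + real j - 1) / (real k - 1)} = {}"
  using assms(3)
proof
  assume hole: "{a<..<b} \<subseteq> {0..<(real k - real j) / real k}"
  have "(real k - real j) / real k \<le> real (k - j) / (real k - 1)"
    using assms(1,2) by (simp add: of_nat_diff frac_le)
  then show thesis
    using hole assms(2) by (intro that[of "k - j"]) auto
next
  assume hole: "{a<..<b} \<subseteq> {real j / real k..<1}"
  have "(real j - 1) / (real k - 1) \<le> real j / real k"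
    using assms(1,2) by (simp add: divide_simps algebra_simps)
  then show thesis
    using hole assms(2) by (intro that[of 0]) auto
qed

theorem mainTheorem3:
  fixes k j :: nat and a b :: real
  assumes "k \<ge> 3" and "2 \<le> j" and "j \<le> k"
    and "0 \<le> a" and "a < b" and "b \<le> 1"
    and "{a<..<b} \<subseteq> {0..<(real k - real j) / real k} \<or> {a<..<b} \<subseteq> {real j / real k..<1}"
  shows "dk k a b \<ge> ln (real j) / ln (real k)"
proof -
  have "j \<noteq> k"
  proof
    assume "j = k"
    then have "{a<..<b} = {}" using assms(1,7) by auto
    then show False using assms(5) by simp
  qed
  then have "j < k" using assms(3) by simp
  obtain c where c: "c + j \<le> k"
    and avoid: "{a<..<b} \<inter> {real c / (real k - 1) ..< (real c + real j - 1) / (real k - 1)} = {}"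
    using window_avoiding_hole[OF assms(2,3,7)] .
  show ?thesis
    unfolding dk_def
  proof (rule hausdorff_dim_ge_holder)
    show "survivor k a b \<subseteq> {0..<1}" by (auto simp: survivor_def)
    show "coded_point k c ` admissible_words j \<subseteq> survivor k a b"
      using coded_point_in_survivor[OF c assms(2) _ avoid] by blast
    show "{0..<1} \<subseteq> word_value j ` admissible_words j"
      using unit_interval_subset_word_value_image assms(2) .
    show "\<bar>word_value j w - word_value j w'\<bar>
        \<le> real j * (real k - 1) / (real k - real j) * \<bar>coded_point k c w - coded_point k c w'\<bar> powr (ln (real j) / ln (real k))"
      if "w \<in> admissible_words j" "w' \<in> admissible_words j" for w w'
      using word_value_holder[OF \<open>j < k\<close> assms(2) that] .
  qed (use \<open>j < k\<close> assms(2) in auto)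
qed

end
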